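(* Let $A\in\mathbb{R}^{n\times n}$ be Metzler and $J\in\mathbb{R}^{n\times n}$ be nonnegative. The following statements are equivalent: (a) There exists $\lambda\in\mathbb{R}^n_{>0}$ such that $\lambda^\top A<0$ and $\lambda^\top (J-I_n)<0$. (b) $\ker\begin{bmatrix} I_n & -A & -(J-I_n)\end{bmatrix}\cap\mathbb{R}^{3n}_{\ge0}=\{0\}$. Moreover, if one of these statements holds, then the impulsive system is asymptotically stable under arbitrary dwell-time, i.e. for every impulse sequence with $T_k\in(0,\infty)$ for all $k$.
   Context: Consider the linear impulsive system $\dot x(t)=Ax(t)$ for $t\neq t_k$, $x(t_k^+)=Jx(t_k)$, $x(t_0)=x_0$, where $x(t)\in\mathbb{R}^n$, $x(t^+):=\lim_{s\downarrow t}x(s)$ (trajectories are left-continuous), and the impulse times $\{t_k\}_{k\in\mathbb{N}}$ form a strictly increasing sequence with $t_k\to\infty$. The dwell-times are $T_k:=t_{k+1}-t_k$. A square matrix is Metzler if all its off-diagonal entries are nonnegative, and nonnegative if all its entries are nonnegative. Vector inequalities are componentwise; $\mathbb{R}^n_{>0}$ ($\mathbb{R}^n_{\ge0}$) denotes vectors with positive (nonnegative) entries. The system is asymptotically stable under a given dwell-time constraint if its zero solution is globally asymptotically stable for every impulse sequence whose dwell-times satisfy the constraint. *)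

theory Defs
  imports "HOL-Analysis.Analysis"
begin

definition metzler :: "real^'n^'n \<Rightarrow> bool" where
  "metzler A \<longleftrightarrow> (\<forall>i j. i \<noteq> j \<longrightarrow> A $ i $ j \<ge> 0)"

definition nonneg_mat :: "real^'n^'n \<Rightarrow> bool" where
  "nonneg_mat J \<longleftrightarrow> (\<forall>i j. J $ i $ j \<ge> 0)"

text \<open>Admissible impulse sequence under arbitrary dwell-time: strictly increasing
  impulse times t 0 < t 1 < ... with t k tending to infinity (all dwell-times in (0,\<infinity>)).\<close>

definition impulse_seq :: "(nat \<Rightarrow> real) \<Rightarrow> bool" where
  "impulse_seq t \<longleftrightarrow> strict_mono t \<and> filterlim t at_top sequentially"

text \<open>x is a (left-continuous) solution on [t 0, \<infinity>) of
  x' = A x for t not an impulse time, x(t_k^+) = J x(t_k); initial time is t 0.\<close>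

definition impulsive_solution ::
  "real^'n^'n \<Rightarrow> real^'n^'n \<Rightarrow> (nat \<Rightarrow> real) \<Rightarrow> (real \<Rightarrow> real^'n) \<Rightarrow> bool" where
  "impulsive_solution A J t x \<longleftrightarrow>
     (\<forall>k. (\<forall>s \<in> {t k <..< t (Suc k)}. (x has_vector_derivative (A *v x s)) (at s))
        \<and> (x \<longlongrightarrow> x (t (Suc k))) (at_left (t (Suc k)))
        \<and> (x \<longlongrightarrow> J *v x (t k)) (at_right (t k)))"

definition impulsive_GAS :: "real^'n^'n \<Rightarrow> real^'n^'n \<Rightarrow> (nat \<Rightarrow> real) \<Rightarrow> bool" where
  "impulsive_GAS A J t \<longleftrightarrow>
     (\<forall>\<epsilon>>0. \<exists>\<delta>>0. \<forall>x. impulsive_solution A J t x \<and> norm (x (t 0)) < \<delta> \<longrightarrow>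
          (\<forall>s\<ge>t 0. norm (x s) < \<epsilon>))
   \<and> (\<forall>x. impulsive_solution A J t x \<longrightarrow> (x \<longlongrightarrow> 0) at_top)"

end

theory Submission
  imports Defs "HOL-Real_Asymp.Real_Asymp"
begin

(* The equivalence of (a) and (b) is Gordan's theorem of the alternative for the columns of
   [I, -A, -(J - I)]: either some vector has positive inner product with all of them, or 0 is a
   nontrivial nonnegative combination of them.

   For stability, V x = sum_i l_i |x_i| is a common Lyapunov function. Since A is Metzler, V decays
   along the flow at the rate c = min_j -(l^T A)_j / l_j (made rigorous by smoothing |x_i| to
   sqrt (x_i^2 + eps^2) and letting eps tend to 0), and since J is nonnegative with l^T J < l^T,
   no impulse increases V. Hence V (x t) <= exp (-c (t - t_0)) V (x t_0) whatever the dwell times. *)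

section \<open>Gordan's theorem of the alternative\<close>

lemma sum_fibre_weights:
  fixes f :: "'i::finite \<Rightarrow> 'b" and G :: "'b \<Rightarrow> 'c::real_vector"
  shows "(\<Sum>i\<in>UNIV. (1 / real (card {j. f j = f i})) *\<^sub>R G (f i)) = (\<Sum>p\<in>range f. G p)"
proof -
  have "(\<Sum>i\<in>UNIV. (1 / real (card {j. f j = f i})) *\<^sub>R G (f i))
     = (\<Sum>p\<in>range f. \<Sum>i\<in>{i\<in>UNIV. f i = p}. (1 / real (card {j. f j = f i})) *\<^sub>R G (f i))"
    by (rule sum.image_gen) simp
  also have "\<dots> = (\<Sum>p\<in>range f. G p)"
  proof (rule sum.cong[OF refl])
    fix p assume "p \<in> range f"
    then have "card {j. f j = p} > 0" by (auto simp: card_gt_0_iff)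
    then show "(\<Sum>i\<in>{i\<in>UNIV. f i = p}. (1 / real (card {j. f j = f i})) *\<^sub>R G (f i)) = G p"
      using \<open>p \<in> range f\<close> by (auto simp: sum_constant_scaleR)
  qed
  finally show ?thesis .
qed

lemma convex_hull_range_weights:
  fixes f :: "'i::finite \<Rightarrow> 'a::real_vector"
  assumes "y \<in> convex hull (range f)"
  shows "\<exists>u. (\<forall>i. 0 \<le> u i) \<and> sum u UNIV = 1 \<and> (\<Sum>i\<in>UNIV. u i *\<^sub>R f i) = y"
proof -
  have "finite (range f)" by simp
  then obtain \<mu> where \<mu>: "\<forall>p\<in>range f. 0 \<le> \<mu> p" "sum \<mu> (range f) = 1" "(\<Sum>p\<in>range f. \<mu> p *\<^sub>R p) = y"
    using assms by (auto simp: convex_hull_finite)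
  \<comment> \<open>spread the weight of each point of the range evenly over its preimage\<close>
  define u where "u i = 1 / real (card {j. f j = f i}) * \<mu> (f i)" for i
  show ?thesis
  proof (intro exI conjI allI)
    show "0 \<le> u i" for i using \<mu>(1) by (simp add: u_def)
    show "sum u UNIV = 1"
      using sum_fibre_weights[of f \<mu>] \<mu>(2) unfolding u_def real_scaleR_def by (rule trans)
    show "(\<Sum>i\<in>UNIV. u i *\<^sub>R f i) = y"
      using sum_fibre_weights[of f "\<lambda>p. \<mu> p *\<^sub>R p"] \<mu>(3)
      unfolding u_def scaleR_scaleR[symmetric] by (rule trans)
  qed
qed

theorem gordan_alternative:
  fixes f :: "'i::finite \<Rightarrow> 'a::euclidean_space"
  assumes "\<And>u. (\<forall>i. 0 \<le> u i) \<Longrightarrow> (\<Sum>i\<in>UNIV. u i *\<^sub>R f i) = 0 \<Longrightarrow> \<forall>i. u i = 0"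
  shows "\<exists>a. \<forall>i. 0 < inner a (f i)"
proof -
  have "0 \<notin> convex hull (range f)"
  proof
    assume "0 \<in> convex hull (range f)"
    then obtain u where u: "\<forall>i. 0 \<le> u i" "sum u UNIV = 1" "(\<Sum>i\<in>UNIV. u i *\<^sub>R f i) = 0"
      using convex_hull_range_weights by blast
    then have "\<forall>i. u i = 0" by (intro assms[OF u(1) u(3)])
    with u(2) show False by simp
  qed
  moreover have "closed (convex hull (range f))"
    by (simp add: compact_imp_closed finite_imp_compact_convex_hull)
  ultimately obtain a b where "0 < b" "\<forall>x\<in>convex hull (range f). b < inner a x"
    using separating_hyperplane_closed_0[OF convex_convex_hull] by blast
  then have "0 < inner a (f i)" for i
    using hull_inc[of "f i" "range f"] by force
  then show ?thesis by blast
qed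

section \<open>Linear copositive certificates\<close>

lemma inner_pos_nonneg_eq_0_iff:
  fixes p q :: "real^'n"
  assumes "\<forall>i. 0 < p $ i" "\<forall>i. 0 \<le> q $ i"
  shows "inner p q = 0 \<longleftrightarrow> q = 0"
proof -
  have "inner p q = 0 \<longleftrightarrow> (\<forall>i. p $ i * q $ i = 0)"
    unfolding inner_vec_def using assms
    by (subst sum_nonneg_eq_0_iff) (auto intro!: mult_nonneg_nonneg simp: less_imp_le)
  also have "\<dots> \<longleftrightarrow> q = 0"
  proof -
    have "p $ i * q $ i = 0 \<longleftrightarrow> q $ i = 0" for i using assms(1)[rule_format, of i] by simp
    then show ?thesis by (simp add: vec_eq_iff)
  qed
  finally show ?thesis .
qed

lemma inner_pos_nonneg_ge_0:
  fixes p q :: "real^'n"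
  assumes "\<forall>i. 0 < p $ i" "\<forall>i. 0 \<le> q $ i"
  shows "0 \<le> inner p q"
  unfolding inner_vec_def using assms by (intro sum_nonneg) (simp add: less_imp_le)

lemma sum_scaleR_axis:
  fixes c :: "'n::finite \<Rightarrow> real"
  shows "(\<Sum>i\<in>UNIV. c i *\<^sub>R (axis i 1 :: real^'n)) = (\<chi> i. c i)"
  by (simp add: vec_eq_iff sum_component axis_def if_distrib cong: if_cong)

lemma sum_scaleR_matrix_axis:
  fixes c :: "'n::finite \<Rightarrow> real" and M :: "real^'n^'n"
  shows "(\<Sum>i\<in>UNIV. c i *\<^sub>R (M *v axis i 1)) = M *v (\<chi> i. c i)"
  by (simp add: vec_eq_iff matrix_vector_mult_def axis_def mult.commute if_distrib sum.delta cong: if_cong)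

lemma sum_UNIV_Plus:
  fixes g :: "('a::finite + 'b::finite) \<Rightarrow> 'c::comm_monoid_add"
  shows "sum g UNIV = (\<Sum>i\<in>UNIV. g (Inl i)) + (\<Sum>i\<in>UNIV. g (Inr i))"
proof -
  have "sum g UNIV = sum g (UNIV <+> UNIV)" by (simp only: UNIV_Plus_UNIV)
  also have "\<dots> = sum (g \<circ> Inl) UNIV + sum (g \<circ> Inr) UNIV" by (rule sum.Plus) simp_all
  finally show ?thesis by (simp add: comp_def)
qed

definition copositive_certificate :: "real^'n^'n \<Rightarrow> real^'n^'n \<Rightarrow> real^'n \<Rightarrow> bool" where
  "copositive_certificate A J l \<longleftrightarrow>
     (\<forall>i. l $ i > 0) \<and> (\<forall>i. (l v* A) $ i < 0) \<and> (\<forall>i. (l v* (J - mat 1)) $ i < 0)"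

definition orthant_kernel_trivial :: "real^'n^'n \<Rightarrow> real^'n^'n \<Rightarrow> bool" where
  "orthant_kernel_trivial A J \<longleftrightarrow>
     (\<forall>u v w :: real^'n. (\<forall>i. u $ i \<ge> 0) \<and> (\<forall>i. v $ i \<ge> 0) \<and> (\<forall>i. w $ i \<ge> 0)
        \<and> u - A *v v - (J - mat 1) *v w = 0 \<longrightarrow> u = 0 \<and> v = 0 \<and> w = 0)"

lemma copositive_certificate_imp_orthant_kernel_trivial:
  fixes A J :: "real^'n^'n"
  assumes "copositive_certificate A J l"
  shows "orthant_kernel_trivial A J"
  unfolding orthant_kernel_trivial_def
proof (intro allI impI, elim conjE)
  fix u v w :: "real^'n"
  assume u: "\<forall>i. u $ i \<ge> 0" and v: "\<forall>i. v $ i \<ge> 0" and w: "\<forall>i. w $ i \<ge> 0"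
    and eq: "u - A *v v - (J - mat 1) *v w = 0"
  have l: "\<forall>i. 0 < l $ i" and lA: "\<forall>i. 0 < (- (l v* A)) $ i"
    and lJ: "\<forall>i. 0 < (- (l v* (J - mat 1))) $ i"
    using assms unfolding copositive_certificate_def by auto
  have "inner l u + inner (- (l v* A)) v + inner (- (l v* (J - mat 1))) w
      = inner l (u - A *v v - (J - mat 1) *v w)"
    by (simp add: inner_diff_right dot_lmul_matrix)
  also have "\<dots> = 0" using eq by simp
  finally have "inner l u = 0" "inner (- (l v* A)) v = 0" "inner (- (l v* (J - mat 1))) w = 0"
    using inner_pos_nonneg_ge_0[OF l u] inner_pos_nonneg_ge_0[OF lA v] inner_pos_nonneg_ge_0[OF lJ w]
    by linarith+
  then show "u = 0 \<and> v = 0 \<and> w = 0"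
    using inner_pos_nonneg_eq_0_iff[OF l u] inner_pos_nonneg_eq_0_iff[OF lA v]
      inner_pos_nonneg_eq_0_iff[OF lJ w]
    by blast
qed

lemma orthant_kernel_trivial_imp_copositive_certificate:
  fixes A J :: "real^'n^'n"
  assumes "orthant_kernel_trivial A J"
  shows "\<exists>l. copositive_certificate A J l"
proof -
  \<comment> \<open>the columns of [I, -A, -(J - I)]\<close>
  define f :: "'n + 'n + 'n \<Rightarrow> real^'n" where
    "f = case_sum (\<lambda>i. axis i 1) (case_sum (\<lambda>j. - (A *v axis j 1)) (\<lambda>j. - ((J - mat 1) *v axis j 1)))"
  have kernel: "\<forall>i. c i = 0" if "\<forall>i. 0 \<le> c i" "(\<Sum>i\<in>UNIV. c i *\<^sub>R f i) = 0" for c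
  proof -
    have "(\<Sum>i\<in>UNIV. c i *\<^sub>R f i)
        = (\<chi> i. c (Inl i)) - A *v (\<chi> i. c (Inr (Inl i))) - (J - mat 1) *v (\<chi> i. c (Inr (Inr i)))"
      by (simp add: sum_UNIV_Plus f_def sum_scaleR_axis sum_scaleR_matrix_axis[symmetric] sum_negf)
    with that have "(\<chi> i. c (Inl i)) = 0 \<and> (\<chi> i. c (Inr (Inl i))) = (0 :: real^'n)
        \<and> (\<chi> i. c (Inr (Inr i))) = (0 :: real^'n)"
      using assms[unfolded orthant_kernel_trivial_def, rule_format,
          of "\<chi> i. c (Inl i)" "\<chi> i. c (Inr (Inl i))" "\<chi> i. c (Inr (Inr i))"]
      by simp
    then have "c (Inl i) = 0" "c (Inr (Inl i)) = 0" "c (Inr (Inr i)) = 0" for i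
      by (simp_all add: vec_eq_iff)
    then show ?thesis by (metis sum.exhaust)
  qed
  from gordan_alternative[OF kernel] obtain a where a: "\<forall>i. 0 < inner a (f i)"
    by blast
  have column: "inner a (- (M *v axis i 1)) = - ((a v* M) $ i)" for M :: "real^'n^'n" and i
    by (simp only: inner_minus_right dot_lmul_matrix[symmetric] inner_axis inner_real_def mult_1_right)
  have "0 < a $ i" for i
    using a[rule_format, of "Inl i"] by (simp add: f_def inner_axis)
  moreover have "(a v* A) $ i < 0" for i
    using a[rule_format, of "Inr (Inl i)"] unfolding f_def sum.case column by simp
  moreover have "(a v* (J - mat 1)) $ i < 0" for i
    using a[rule_format, of "Inr (Inr i)"] unfolding f_def sum.case column by simp
  ultimately show ?thesis
    unfolding copositive_certificate_def by blast
qed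

section \<open>Decay of the weighted l1 norm\<close>

definition weighted_l1_norm :: "real^'n \<Rightarrow> real^'n \<Rightarrow> real" where
  "weighted_l1_norm l z = (\<Sum>i\<in>UNIV. l $ i * \<bar>z $ i\<bar>)"

lemma weighted_l1_norm_lower_bound:
  assumes "0 \<le> m" "\<forall>i. m \<le> l $ i"
  shows "m * norm z \<le> weighted_l1_norm l z"
proof -
  have "m * norm z \<le> m * (\<Sum>i\<in>UNIV. \<bar>z $ i\<bar>)"
    by (intro mult_left_mono norm_le_l1_cart assms(1))
  also have "\<dots> = (\<Sum>i\<in>UNIV. m * \<bar>z $ i\<bar>)" by (simp add: sum_distrib_left)
  also have "\<dots> \<le> weighted_l1_norm l z"
    unfolding weighted_l1_norm_def using assms(2) by (intro sum_mono mult_right_mono) auto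
  finally show ?thesis .
qed

lemma weighted_l1_norm_upper_bound:
  assumes "\<forall>i. 0 \<le> l $ i"
  shows "weighted_l1_norm l z \<le> (\<Sum>i\<in>UNIV. l $ i) * norm z"
proof -
  have "weighted_l1_norm l z \<le> (\<Sum>i\<in>UNIV. l $ i * norm z)"
    unfolding weighted_l1_norm_def using assms
    by (intro sum_mono mult_left_mono component_le_norm_cart) auto
  then show ?thesis by (simp add: sum_distrib_right)
qed

lemma sum_vector_matrix_mult_weighted:
  fixes l :: "real^'m" and M :: "real^'n^'m"
  shows "(\<Sum>j\<in>UNIV. (l v* M) $ j * s j) = (\<Sum>i\<in>UNIV. l $ i * (\<Sum>j\<in>UNIV. M $ i $ j * s j))"
  unfolding vector_matrix_mult_def
  by (simp add: sum_distrib_left sum_distrib_right mult.assoc) (rule sum.swap)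

lemma weighted_l1_norm_nonneg_matrix_le:
  fixes J :: "real^'n^'n"
  assumes "nonneg_mat J" "\<forall>i. 0 \<le> l $ i" "\<forall>j. (l v* J) $ j \<le> l $ j"
  shows "weighted_l1_norm l (J *v z) \<le> weighted_l1_norm l z"
proof -
  have "weighted_l1_norm l (J *v z) \<le> (\<Sum>i\<in>UNIV. l $ i * (\<Sum>j\<in>UNIV. J $ i $ j * \<bar>z $ j\<bar>))"
    unfolding weighted_l1_norm_def
  proof (intro sum_mono mult_left_mono)
    fix i
    have "\<bar>(J *v z) $ i\<bar> \<le> (\<Sum>j\<in>UNIV. \<bar>J $ i $ j * z $ j\<bar>)"
      by (simp add: matrix_vector_mult_def sum_abs)
    then show "\<bar>(J *v z) $ i\<bar> \<le> (\<Sum>j\<in>UNIV. J $ i $ j * \<bar>z $ j\<bar>)"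
      using assms(1) by (simp add: nonneg_mat_def abs_mult)
  qed (use assms(2) in auto)
  also have "\<dots> = (\<Sum>j\<in>UNIV. (l v* J) $ j * \<bar>z $ j\<bar>)"
    by (rule sum_vector_matrix_mult_weighted[symmetric])
  also have "\<dots> \<le> weighted_l1_norm l z"
    unfolding weighted_l1_norm_def using assms(3) by (intro sum_mono mult_right_mono) auto
  finally show ?thesis .
qed

lemma has_real_derivative_vec_nth:
  assumes "(y has_vector_derivative y') (at s)"
  shows "((\<lambda>s. y s $ i) has_real_derivative y' $ i) (at s)"
  using bounded_linear.has_vector_derivative[OF bounded_linear_vec_nth assms, of i]
  by (simp add: has_real_derivative_iff_has_vector_derivative)

lemma has_real_derivative_sqrt_sq_add_sq:
  assumes "(g has_real_derivative g') (at s)" "\<epsilon> \<noteq> 0"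
  shows "((\<lambda>s. sqrt ((g s)\<^sup>2 + \<epsilon>\<^sup>2)) has_real_derivative g s * g' / sqrt ((g s)\<^sup>2 + \<epsilon>\<^sup>2)) (at s)"
proof -
  have pos: "0 < (g s)\<^sup>2 + \<epsilon>\<^sup>2" using assms(2) by (intro add_nonneg_pos) auto
  have "((\<lambda>s. (g s)\<^sup>2 + \<epsilon>\<^sup>2) has_real_derivative 2 * g s * g') (at s)"
    by (auto intro!: derivative_eq_intros assms(1))
  from DERIV_chain'[OF this DERIV_real_sqrt[OF pos]]
  have "((\<lambda>s. sqrt ((g s)\<^sup>2 + \<epsilon>\<^sup>2)) has_real_derivative
      inverse (sqrt ((g s)\<^sup>2 + \<epsilon>\<^sup>2)) / 2 * (2 * g s * g')) (at s)"
    by (simp only:)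
  moreover have "inverse (sqrt ((g s)\<^sup>2 + \<epsilon>\<^sup>2)) / 2 * (2 * g s * g') = g s * g' / sqrt ((g s)\<^sup>2 + \<epsilon>\<^sup>2)"
    using pos by (simp add: field_simps)
  ultimately show ?thesis by simp
qed

lemma abs_le_sqrt_sq_add_sq: "\<bar>z\<bar> \<le> sqrt (z\<^sup>2 + e\<^sup>2)"
  for z e :: real
  by (rule real_le_rsqrt) simp

lemma sqrt_sq_add_sq_le_abs_add:
  fixes z e :: real
  assumes "0 \<le> e"
  shows "sqrt (z\<^sup>2 + e\<^sup>2) \<le> \<bar>z\<bar> + e"
  using assms by (intro real_le_lsqrt) (auto simp: power2_eq_square algebra_simps)

lemma mult_divide_sqrt_sq_add_sq_le:
  fixes z w \<epsilon> :: real
  shows "z * w / sqrt (z\<^sup>2 + \<epsilon>\<^sup>2) \<le> sqrt (w\<^sup>2 + \<epsilon>\<^sup>2)"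
proof (cases "sqrt (z\<^sup>2 + \<epsilon>\<^sup>2) = 0")
  case False
  moreover have "0 \<le> sqrt (z\<^sup>2 + \<epsilon>\<^sup>2)" by (intro real_sqrt_ge_zero add_nonneg_nonneg) auto
  ultimately have pos: "0 < sqrt (z\<^sup>2 + \<epsilon>\<^sup>2)" by linarith
  have "z * w \<le> \<bar>z\<bar> * \<bar>w\<bar>" by (metis abs_ge_self abs_mult)
  also have "\<dots> \<le> sqrt (z\<^sup>2 + \<epsilon>\<^sup>2) * sqrt (w\<^sup>2 + \<epsilon>\<^sup>2)"
    by (intro mult_mono abs_le_sqrt_sq_add_sq) auto
  finally show ?thesis using pos by (simp add: divide_le_eq mult.commute)
qed simp

lemma sqrt_sq_add_sq_le_square_divide:
  fixes z \<epsilon> :: real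
  assumes "0 < \<epsilon>"
  shows "sqrt (z\<^sup>2 + \<epsilon>\<^sup>2) - \<epsilon> \<le> z * z / sqrt (z\<^sup>2 + \<epsilon>\<^sup>2)"
proof -
  define s where "s = sqrt (z\<^sup>2 + \<epsilon>\<^sup>2)"
  have "\<epsilon> \<le> s" unfolding s_def by (rule real_le_rsqrt) simp
  then have "0 < s" using assms by linarith
  have "s\<^sup>2 = z\<^sup>2 + \<epsilon>\<^sup>2" unfolding s_def by simp
  then have "z * z / s = s - \<epsilon>\<^sup>2 / s"
    using \<open>0 < s\<close> by (simp add: field_simps power2_eq_square)
  moreover have "\<epsilon>\<^sup>2 / s \<le> \<epsilon>"
    using \<open>\<epsilon> \<le> s\<close> \<open>0 < s\<close> assms by (simp add: divide_le_eq power2_eq_square mult_left_mono)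
  ultimately show ?thesis unfolding s_def by linarith
qed

lemma metzler_row_smoothed_bound:
  fixes A :: "real^'n^'n" and z :: "real^'n"
  assumes "metzler A" "0 < \<epsilon>"
  defines "s \<equiv> \<lambda>j. sqrt ((z $ j)\<^sup>2 + \<epsilon>\<^sup>2)"
  shows "z $ i * (A *v z) $ i / s i \<le> (\<Sum>j\<in>UNIV. A $ i $ j * s j) + \<bar>A $ i $ i\<bar> * \<epsilon>"
proof -
  have entry: "A $ i $ j * (z $ i * z $ j / s i)
      \<le> A $ i $ j * s j + (if j = i then \<bar>A $ i $ i\<bar> * \<epsilon> else 0)" for j
  proof (cases "j = i")
    case False
    then have "A $ i $ j * (z $ i * z $ j / s i) \<le> A $ i $ j * s j"
      using assms(1) unfolding metzler_def s_def
      by (intro mult_left_mono mult_divide_sqrt_sq_add_sq_le) auto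
    then show ?thesis using False by simp
  next
    case True
    \<comment> \<open>the diagonal entry may have either sign, but z i * z i / s i lies in [s i - \<epsilon>, s i]\<close>
    have "\<bar>z $ i * z $ i / s i - s i\<bar> \<le> \<epsilon>"
      using sqrt_sq_add_sq_le_square_divide[OF assms(2), of "z $ i"]
        mult_divide_sqrt_sq_add_sq_le[of "z $ i" "z $ i" \<epsilon>]
      unfolding s_def by linarith
    then have "\<bar>A $ i $ i * (z $ i * z $ i / s i - s i)\<bar> \<le> \<bar>A $ i $ i\<bar> * \<epsilon>"
      unfolding abs_mult by (rule mult_left_mono) simp
    then show ?thesis
      using True abs_ge_self[of "A $ i $ i * (z $ i * z $ i / s i - s i)"]
      by (simp add: right_diff_distrib)
  qed
  have "z $ i * (A *v z) $ i / s i = (\<Sum>j\<in>UNIV. A $ i $ j * (z $ i * z $ j / s i))"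
    by (simp add: matrix_vector_mult_def sum_distrib_left sum_divide_distrib mult_ac)
  also have "\<dots> \<le> (\<Sum>j\<in>UNIV. A $ i $ j * s j + (if j = i then \<bar>A $ i $ i\<bar> * \<epsilon> else 0))"
    by (rule sum_mono) (rule entry)
  also have "\<dots> = (\<Sum>j\<in>UNIV. A $ i $ j * s j) + \<bar>A $ i $ i\<bar> * \<epsilon>"
    by (simp add: sum.distrib)
  finally show ?thesis .
qed

lemma metzler_smoothed_weighted_bound:
  fixes A :: "real^'n^'n" and l z :: "real^'n"
  assumes "metzler A" "\<forall>i. 0 \<le> l $ i" "0 < \<epsilon>"
  defines "s \<equiv> \<lambda>j. sqrt ((z $ j)\<^sup>2 + \<epsilon>\<^sup>2)"
  shows "(\<Sum>i\<in>UNIV. l $ i * (z $ i * (A *v z) $ i / s i))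
     \<le> (\<Sum>j\<in>UNIV. (l v* A) $ j * s j) + (\<Sum>i\<in>UNIV. l $ i * \<bar>A $ i $ i\<bar>) * \<epsilon>"
proof -
  have "(\<Sum>i\<in>UNIV. l $ i * (z $ i * (A *v z) $ i / s i))
      \<le> (\<Sum>i\<in>UNIV. l $ i * ((\<Sum>j\<in>UNIV. A $ i $ j * s j) + \<bar>A $ i $ i\<bar> * \<epsilon>))"
    using assms(2) unfolding s_def
    by (intro sum_mono mult_left_mono metzler_row_smoothed_bound[OF assms(1,3)]) auto
  also have "\<dots> = (\<Sum>j\<in>UNIV. (l v* A) $ j * s j) + (\<Sum>i\<in>UNIV. l $ i * \<bar>A $ i $ i\<bar>) * \<epsilon>"
    by (simp add: sum_vector_matrix_mult_weighted distrib_left sum.distrib sum_distrib_right mult.assoc)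
  finally show ?thesis .
qed

lemma exp_decay_of_derivative_bound:
  fixes f f' :: "real \<Rightarrow> real"
  assumes "a \<le> b" "c \<noteq> 0" "continuous_on {a..b} f"
    and "\<And>s. a < s \<Longrightarrow> s < b \<Longrightarrow> (f has_real_derivative f' s) (at s)"
    and "\<And>s. a < s \<Longrightarrow> s < b \<Longrightarrow> f' s \<le> - c * f s + \<beta>"
  shows "f b - \<beta> / c \<le> exp (- c * (b - a)) * (f a - \<beta> / c)"
proof -
  define W where "W s = exp (c * s) * (f s - \<beta> / c)" for s
  have "W b \<le> W a"
  proof (rule DERIV_nonpos_imp_decreasing_open[OF assms(1)])
    fix s assume s: "a < s" "s < b"
    have "(W has_real_derivative exp (c * s) * (c * (f s - \<beta> / c) + f' s)) (at s)"
      unfolding W_def by (auto intro!: derivative_eq_intros assms(4)[OF s] simp: algebra_simps)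
    moreover have "exp (c * s) * (c * (f s - \<beta> / c) + f' s) \<le> 0"
      using assms(5)[OF s] assms(2) by (intro mult_nonneg_nonpos) (auto simp: algebra_simps)
    ultimately show "\<exists>y. (W has_real_derivative y) (at s) \<and> y \<le> 0" by blast
  next
    show "continuous_on {a..b} W" unfolding W_def by (intro continuous_intros assms(3))
  qed
  moreover have "exp (c * a) = exp (c * b) * exp (- c * (b - a))"
    by (simp add: mult_exp_exp algebra_simps)
  ultimately have "exp (c * b) * (f b - \<beta> / c) \<le> exp (c * b) * (exp (- c * (b - a)) * (f a - \<beta> / c))"
    by (simp add: W_def mult.assoc)
  then show ?thesis by simp
qed

definition smoothed_l1_norm :: "real^'n \<Rightarrow> real \<Rightarrow> real^'n \<Rightarrow> real" where
  "smoothed_l1_norm l \<epsilon> z = (\<Sum>i\<in>UNIV. l $ i * sqrt ((z $ i)\<^sup>2 + \<epsilon>\<^sup>2))"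

lemma weighted_l1_norm_le_smoothed:
  assumes "\<forall>i. 0 \<le> l $ i"
  shows "weighted_l1_norm l z \<le> smoothed_l1_norm l \<epsilon> z"
  unfolding weighted_l1_norm_def smoothed_l1_norm_def using assms
  by (intro sum_mono mult_left_mono abs_le_sqrt_sq_add_sq) auto

lemma smoothed_le_weighted_l1_norm:
  assumes "\<forall>i. 0 \<le> l $ i" "0 \<le> \<epsilon>"
  shows "smoothed_l1_norm l \<epsilon> z \<le> weighted_l1_norm l z + \<epsilon> * (\<Sum>i\<in>UNIV. l $ i)"
proof -
  have "smoothed_l1_norm l \<epsilon> z \<le> (\<Sum>i\<in>UNIV. l $ i * (\<bar>z $ i\<bar> + \<epsilon>))"
    unfolding smoothed_l1_norm_def using assms
    by (intro sum_mono mult_left_mono sqrt_sq_add_sq_le_abs_add) auto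
  then show ?thesis
    by (simp add: weighted_l1_norm_def distrib_left sum.distrib sum_distrib_left mult_ac)
qed

lemma smoothed_l1_norm_flow_decay:
  fixes A :: "real^'n^'n" and y :: "real \<Rightarrow> real^'n"
  assumes "metzler A" "\<forall>i. 0 \<le> l $ i" "0 < c" "\<forall>j. (l v* A) $ j \<le> - c * l $ j"
    and "a \<le> b" "continuous_on {a..b} y"
    and "\<And>s. a < s \<Longrightarrow> s < b \<Longrightarrow> (y has_vector_derivative A *v y s) (at s)"
    and "0 < \<epsilon>"
  defines "X \<equiv> (\<Sum>i\<in>UNIV. l $ i * \<bar>A $ i $ i\<bar>) * \<epsilon> / c"
  shows "smoothed_l1_norm l \<epsilon> (y b) - X \<le> exp (- c * (b - a)) * (smoothed_l1_norm l \<epsilon> (y a) - X)"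
proof -
  define K where "K = (\<Sum>i\<in>UNIV. l $ i * \<bar>A $ i $ i\<bar>)"
  define V where "V s = smoothed_l1_norm l \<epsilon> (y s)" for s
  define V' where "V' s = (\<Sum>i\<in>UNIV. l $ i * (y s $ i * (A *v y s) $ i / sqrt ((y s $ i)\<^sup>2 + \<epsilon>\<^sup>2)))" for s
  have "V b - K * \<epsilon> / c \<le> exp (- c * (b - a)) * (V a - K * \<epsilon> / c)"
  proof (rule exp_decay_of_derivative_bound[where f' = V'])
    fix s assume s: "a < s" "s < b"
    show "(V has_real_derivative V' s) (at s)"
      unfolding V_def V'_def smoothed_l1_norm_def using assms(8)
      by (intro DERIV_sum DERIV_cmult has_real_derivative_sqrt_sq_add_sq
          has_real_derivative_vec_nth assms(7)[OF s]) auto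
    have "V' s \<le> (\<Sum>j\<in>UNIV. (l v* A) $ j * sqrt ((y s $ j)\<^sup>2 + \<epsilon>\<^sup>2)) + K * \<epsilon>"
      unfolding V'_def K_def by (rule metzler_smoothed_weighted_bound[OF assms(1,2,8)])
    also have "\<dots> \<le> (\<Sum>j\<in>UNIV. (- c * l $ j) * sqrt ((y s $ j)\<^sup>2 + \<epsilon>\<^sup>2)) + K * \<epsilon>"
      using assms(4) by (intro add_right_mono sum_mono mult_right_mono) auto
    also have "\<dots> = - c * V s + K * \<epsilon>"
      unfolding V_def smoothed_l1_norm_def by (simp add: sum_distrib_left mult_ac)
    finally show "V' s \<le> - c * V s + K * \<epsilon>" .
  next
    show "continuous_on {a..b} V"
      unfolding V_def smoothed_l1_norm_def by (intro continuous_intros assms(6))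
  qed (use assms(3,5) in auto)
  then show ?thesis unfolding V_def K_def X_def .
qed

lemma weighted_l1_norm_flow_decay_approx:
  fixes A :: "real^'n^'n" and y :: "real \<Rightarrow> real^'n"
  assumes "metzler A" "\<forall>i. 0 < l $ i" "0 < c" "\<forall>j. (l v* A) $ j \<le> - c * l $ j"
    and "a \<le> b" "continuous_on {a..b} y"
    and "\<And>s. a < s \<Longrightarrow> s < b \<Longrightarrow> (y has_vector_derivative A *v y s) (at s)"
    and "0 < \<epsilon>"
  shows "weighted_l1_norm l (y b) \<le> exp (- c * (b - a)) * weighted_l1_norm l (y a)
           + \<epsilon> * ((\<Sum>i\<in>UNIV. l $ i) + (\<Sum>i\<in>UNIV. l $ i * \<bar>A $ i $ i\<bar>) / c)"
proof -
  define L where "L = (\<Sum>i\<in>UNIV. l $ i)"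
  define E where "E = exp (- c * (b - a))"
  define X where "X = (\<Sum>i\<in>UNIV. l $ i * \<bar>A $ i $ i\<bar>) * \<epsilon> / c"
  have l: "\<forall>i. 0 \<le> l $ i" using assms(2) by (auto intro: less_imp_le)
  have "0 \<le> E" "E \<le> 1" unfolding E_def using assms(3,5) by (auto simp: zero_le_mult_iff)
  have "0 \<le> X" "0 \<le> \<epsilon> * L"
    unfolding X_def L_def using l assms(3,8)
    by (auto intro!: sum_nonneg mult_nonneg_nonneg divide_nonneg_pos)
  have decay: "smoothed_l1_norm l \<epsilon> (y b) - X \<le> E * (smoothed_l1_norm l \<epsilon> (y a) - X)"
    unfolding E_def X_def by (rule smoothed_l1_norm_flow_decay[OF assms(1) l assms(3-8)])
  have "weighted_l1_norm l (y b) \<le> smoothed_l1_norm l \<epsilon> (y b)"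
    by (rule weighted_l1_norm_le_smoothed[OF l])
  also have "\<dots> \<le> E * smoothed_l1_norm l \<epsilon> (y a) + (1 - E) * X"
    using decay by (simp add: right_diff_distrib left_diff_distrib)
  also have "\<dots> \<le> E * (weighted_l1_norm l (y a) + \<epsilon> * L) + 1 * X"
    using smoothed_le_weighted_l1_norm[OF l, of \<epsilon> "y a"] assms(8) \<open>0 \<le> E\<close> \<open>0 \<le> X\<close>
    unfolding L_def by (intro add_mono mult_left_mono mult_right_mono) auto
  also have "\<dots> \<le> E * weighted_l1_norm l (y a) + \<epsilon> * L + X"
    using mult_left_le_one_le[OF \<open>0 \<le> \<epsilon> * L\<close> \<open>0 \<le> E\<close> \<open>E \<le> 1\<close>]
    by (simp add: distrib_left)
  finally show ?thesis by (simp add: E_def L_def X_def algebra_simps)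
qed

lemma weighted_l1_norm_flow_decay:
  fixes A :: "real^'n^'n" and y :: "real \<Rightarrow> real^'n"
  assumes "metzler A" "\<forall>i. 0 < l $ i" "0 < c" "\<forall>j. (l v* A) $ j \<le> - c * l $ j"
    and "a \<le> b" "continuous_on {a..b} y"
    and "\<And>s. a < s \<Longrightarrow> s < b \<Longrightarrow> (y has_vector_derivative A *v y s) (at s)"
  shows "weighted_l1_norm l (y b) \<le> exp (- c * (b - a)) * weighted_l1_norm l (y a)"
proof (rule field_le_epsilon)
  fix e :: real assume "0 < e"
  define M where "M = (\<Sum>i\<in>UNIV. l $ i) + (\<Sum>i\<in>UNIV. l $ i * \<bar>A $ i $ i\<bar>) / c"
  have "0 \<le> M" unfolding M_def using assms(2,3)
    by (intro add_nonneg_nonneg divide_nonneg_pos sum_nonneg mult_nonneg_nonneg) (auto intro: less_imp_le)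
  then have "0 < e / (M + 1)" "e / (M + 1) * M \<le> e"
    using \<open>0 < e\<close> by (auto simp: field_simps)
  with weighted_l1_norm_flow_decay_approx[OF assms, of "e / (M + 1)"]
  show "weighted_l1_norm l (y b) \<le> exp (- c * (b - a)) * weighted_l1_norm l (y a) + e"
    unfolding M_def by linarith
qed

section \<open>Stability under arbitrary dwell-time\<close>

lemma impulsive_solution_between_impulses:
  assumes sol: "impulsive_solution A J t x" and "t k < t (Suc k)"
  defines "y \<equiv> x(t k := J *v x (t k))"
  shows "continuous_on {t k..t (Suc k)} y"
    and "\<And>s. t k < s \<Longrightarrow> s < t (Suc k) \<Longrightarrow> (y has_vector_derivative A *v y s) (at s)"
proof -
  have flow: "\<forall>s\<in>{t k<..<t (Suc k)}. (x has_vector_derivative A *v x s) (at s)"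
    and left: "(x \<longlongrightarrow> x (t (Suc k))) (at_left (t (Suc k)))"
    and right: "(x \<longlongrightarrow> J *v x (t k)) (at_right (t k))"
    using sol unfolding impulsive_solution_def by auto
  show deriv: "(y has_vector_derivative A *v y s) (at s)" if "t k < s" "s < t (Suc k)" for s
  proof -
    have "(x has_vector_derivative A *v x s) (at s)" using flow that by auto
    then have "(y has_vector_derivative A *v x s) (at s)"
      by (rule has_vector_derivative_transform_within_open[where S = "{t k<..<t (Suc k)}"])
         (use that in \<open>auto simp: y_def\<close>)
    then show ?thesis using that by (simp add: y_def)
  qed
  show "continuous_on {t k..t (Suc k)} y"
  proof (rule continuous_on_IccI)
    have "\<forall>\<^sub>F s in at_right (t k). x s = y s"
      using eventually_at_right_less[of "t k"] by eventually_elim (auto simp: y_def)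
    moreover have "y (t k) = J *v x (t k)" by (simp add: y_def)
    ultimately show "(y \<longlongrightarrow> y (t k)) (at_right (t k))"
      using right by (simp add: tendsto_cong)
    have "\<forall>\<^sub>F s in at_left (t (Suc k)). x s = y s"
      using eventually_at_left_real[OF assms(2)] by eventually_elim (auto simp: y_def)
    moreover have "y (t (Suc k)) = x (t (Suc k))" using assms(2) by (simp add: y_def)
    ultimately show "(y \<longlongrightarrow> y (t (Suc k))) (at_left (t (Suc k)))"
      using left by (simp add: tendsto_cong)
    show "(y \<longlongrightarrow> y s) (at s)" if "t k < s" "s < t (Suc k)" for s
      using has_vector_derivative_continuous[OF deriv[OF that]] by (simp add: continuous_at)
  qed (use assms(2) in auto)
qed

lemma weighted_l1_norm_decay_between_impulses:
  fixes A J :: "real^'n^'n"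
  assumes "metzler A" "\<forall>i. 0 < l $ i" "0 < c" "\<forall>j. (l v* A) $ j \<le> - c * l $ j"
    and "impulsive_solution A J t x" "t k < r" "r \<le> t (Suc k)"
  shows "weighted_l1_norm l (x r) \<le> exp (- c * (r - t k)) * weighted_l1_norm l (J *v x (t k))"
proof -
  define y where "y = x(t k := J *v x (t k))"
  have tk: "t k < t (Suc k)" using assms(6,7) by linarith
  note piece = impulsive_solution_between_impulses[OF assms(5) tk, folded y_def]
  have "weighted_l1_norm l (y r) \<le> exp (- c * (r - t k)) * weighted_l1_norm l (y (t k))"
  proof (rule weighted_l1_norm_flow_decay[OF assms(1-4)])
    show "continuous_on {t k..r} y"
      using assms(7) by (intro continuous_on_subset[OF piece(1)]) auto
  qed (use assms(6,7) piece(2) in auto)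
  then show ?thesis using assms(6) by (simp add: y_def)
qed

lemma exp_decay_across_impulses:
  fixes g :: "real \<Rightarrow> real"
  assumes "impulse_seq t"
    and piece: "\<And>k r. t k < r \<Longrightarrow> r \<le> t (Suc k) \<Longrightarrow> g r \<le> exp (- c * (r - t k)) * g (t k)"
    and "t 0 \<le> s"
  shows "g s \<le> exp (- c * (s - t 0)) * g (t 0)"
proof -
  have tSuc: "t k < t (Suc k)" for k
    using assms(1) unfolding impulse_seq_def by (simp add: strict_mono_Suc_iff)
  have step: "g r \<le> exp (- c * (r - t 0)) * g (t 0)"
    if "t k < r" "r \<le> t (Suc k)" "g (t k) \<le> exp (- c * (t k - t 0)) * g (t 0)" for k r
  proof -
    have "g r \<le> exp (- c * (r - t k)) * (exp (- c * (t k - t 0)) * g (t 0))"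
      using piece[OF that(1,2)] mult_left_mono[OF that(3) exp_ge_zero] by (rule order_trans)
    also have "\<dots> = exp (- c * (r - t k) + - c * (t k - t 0)) * g (t 0)"
      by (simp only: mult.assoc[symmetric] mult_exp_exp)
    also have "- c * (r - t k) + - c * (t k - t 0) = - c * (r - t 0)"
      by (simp add: algebra_simps)
    finally show ?thesis .
  qed
  have at_impulses: "g (t k) \<le> exp (- c * (t k - t 0)) * g (t 0)" for k
  proof (induction k)
    case (Suc k)
    show ?case by (rule step[OF tSuc order_refl Suc.IH])
  qed simp
  show ?thesis
  proof (cases "s = t 0")
    case False
    obtain N where "s \<le> t N"
      using assms(1) unfolding impulse_seq_def filterlim_at_top eventually_sequentially by blast
    then obtain k where "\<forall>i\<le>k. \<not> s \<le> t i" "s \<le> t (Suc k)"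
      using ex_least_nat_less[of "\<lambda>n. s \<le> t n" N] False assms(3) by auto
    then show ?thesis by (intro step[OF _ _ at_impulses]) auto
  qed simp
qed

lemma impulsive_GAS_if_exponential_bound:
  fixes A J :: "real^'n^'n"
  assumes "0 \<le> M" "0 < c"
    and bound: "\<And>x s. impulsive_solution A J t x \<Longrightarrow> t 0 \<le> s \<Longrightarrow>
      norm (x s) \<le> M * exp (- c * (s - t 0)) * norm (x (t 0))"
  shows "impulsive_GAS A J t"
  unfolding impulsive_GAS_def
proof (intro conjI allI impI)
  fix \<epsilon> :: real assume "0 < \<epsilon>"
  show "\<exists>\<delta>>0. \<forall>x. impulsive_solution A J t x \<and> norm (x (t 0)) < \<delta> \<longrightarrow> (\<forall>s\<ge>t 0. norm (x s) < \<epsilon>)"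
  proof (intro exI conjI allI impI)
    show "0 < \<epsilon> / (M + 1)" using \<open>0 < \<epsilon>\<close> assms(1) by simp
    fix x s assume x: "impulsive_solution A J t x \<and> norm (x (t 0)) < \<epsilon> / (M + 1)" and "t 0 \<le> s"
    have "norm (x s) \<le> M * exp (- c * (s - t 0)) * norm (x (t 0))"
      using bound x \<open>t 0 \<le> s\<close> by blast
    also have "\<dots> \<le> M * norm (x (t 0))"
    proof (intro mult_right_mono mult_right_le_one_le)
      show "exp (- c * (s - t 0)) \<le> 1"
        using assms(2) \<open>t 0 \<le> s\<close> by (simp add: zero_le_mult_iff)
    qed (use assms(1) in auto)
    also have "\<dots> \<le> M * (\<epsilon> / (M + 1))"
      using x assms(1) by (intro mult_left_mono) auto
    also have "\<dots> < \<epsilon>" using \<open>0 < \<epsilon>\<close> assms(1) by (simp add: field_simps)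
    finally show "norm (x s) < \<epsilon>" .
  qed
next
  fix x assume "impulsive_solution A J t x"
  have "((\<lambda>s. exp (- c * (s - t 0))) \<longlongrightarrow> 0) at_top"
    using assms(2) by real_asymp
  then have "((\<lambda>s. M * exp (- c * (s - t 0)) * norm (x (t 0))) \<longlongrightarrow> 0) at_top"
    by (intro tendsto_mult_left_zero tendsto_mult_right_zero)
  moreover have "\<forall>\<^sub>F s in at_top. norm (x s) \<le> M * exp (- c * (s - t 0)) * norm (x (t 0))"
    using eventually_ge_at_top[of "t 0"] by eventually_elim (rule bound[OF \<open>impulsive_solution A J t x\<close>])
  ultimately show "(x \<longlongrightarrow> 0) at_top" by (rule Lim_null_comparison[rotated])
qed

lemma weighted_l1_norm_impulsive_decay:
  fixes A J :: "real^'n^'n"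
  assumes "metzler A" "nonneg_mat J" "\<forall>i. 0 < l $ i"
    and "0 < c" "\<forall>j. (l v* A) $ j \<le> - c * l $ j" "\<forall>j. (l v* J) $ j \<le> l $ j"
    and "impulse_seq t" "impulsive_solution A J t x" "t 0 \<le> s"
  shows "weighted_l1_norm l (x s) \<le> exp (- c * (s - t 0)) * weighted_l1_norm l (x (t 0))"
proof (rule exp_decay_across_impulses[OF assms(7) _ assms(9)])
  fix k r assume "t k < r" "r \<le> t (Suc k)"
  have "weighted_l1_norm l (x r) \<le> exp (- c * (r - t k)) * weighted_l1_norm l (J *v x (t k))"
    by (rule weighted_l1_norm_decay_between_impulses[OF assms(1,3-5,8)
          \<open>t k < r\<close> \<open>r \<le> t (Suc k)\<close>])
  also have "\<dots> \<le> exp (- c * (r - t k)) * weighted_l1_norm l (x (t k))"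
    using assms(2,3,6)
    by (intro mult_left_mono weighted_l1_norm_nonneg_matrix_le) (auto intro: less_imp_le)
  finally show "weighted_l1_norm l (x r) \<le> exp (- c * (r - t k)) * weighted_l1_norm l (x (t k))" .
qed

lemma uniform_decay_rate:
  fixes A :: "real^'n^'n"
  assumes "\<forall>i. 0 < l $ i" "\<forall>i. (l v* A) $ i < 0"
  shows "\<exists>c>0. \<forall>j. (l v* A) $ j \<le> - c * l $ j"
proof (intro exI conjI allI)
  define c where "c = Min (range (\<lambda>j. - (l v* A) $ j / l $ j))"
  show "0 < c" unfolding c_def using assms by (auto simp: divide_neg_pos)
  fix j
  have "c \<le> - (l v* A) $ j / l $ j" unfolding c_def by (rule Min_le) auto
  then have "c * l $ j \<le> - (l v* A) $ j / l $ j * l $ j"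
    using assms(1) by (intro mult_right_mono) (auto intro: less_imp_le)
  also have "\<dots> = - (l v* A) $ j" using assms(1)[rule_format, of j] by simp
  finally show "(l v* A) $ j \<le> - c * l $ j" by simp
qed

lemma copositive_certificate_imp_impulsive_GAS:
  fixes A J :: "real^'n^'n"
  assumes "metzler A" "nonneg_mat J" "copositive_certificate A J l" "impulse_seq t"
  shows "impulsive_GAS A J t"
proof -
  have l: "\<forall>i. 0 < l $ i" and lA: "\<forall>i. (l v* A) $ i < 0" and lJ: "\<forall>i. (l v* J) $ i \<le> l $ i"
    using assms(3) by (auto simp: copositive_certificate_def vector_matrix_mult_diff_rdistrib less_imp_le)
  obtain c where "0 < c" and rate: "\<forall>j. (l v* A) $ j \<le> - c * l $ j"
    using uniform_decay_rate[OF l lA] by blast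
  define m where "m = Min (range (($) l))"
  define L where "L = (\<Sum>i\<in>UNIV. l $ i)"
  have "0 < m" "\<forall>i. m \<le> l $ i" unfolding m_def using l by auto
  have "norm (x s) \<le> L / m * exp (- c * (s - t 0)) * norm (x (t 0))"
    if "impulsive_solution A J t x" "t 0 \<le> s" for x s
  proof -
    have "m * norm (x s) \<le> weighted_l1_norm l (x s)"
      using \<open>0 < m\<close> \<open>\<forall>i. m \<le> l $ i\<close> by (intro weighted_l1_norm_lower_bound) auto
    also have "\<dots> \<le> exp (- c * (s - t 0)) * weighted_l1_norm l (x (t 0))"
      by (rule weighted_l1_norm_impulsive_decay[OF assms(1,2) l \<open>0 < c\<close> rate lJ assms(4) that])
    also have "\<dots> \<le> exp (- c * (s - t 0)) * (L * norm (x (t 0)))"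
      unfolding L_def using l by (intro mult_left_mono weighted_l1_norm_upper_bound) (auto intro: less_imp_le)
    finally show ?thesis using \<open>0 < m\<close> by (simp add: field_simps)
  qed
  moreover have "0 \<le> L / m"
    unfolding L_def using l \<open>0 < m\<close> by (intro divide_nonneg_pos sum_nonneg) (auto intro: less_imp_le)
  ultimately show ?thesis using \<open>0 < c\<close> by (intro impulsive_GAS_if_exponential_bound) auto
qed

theorem theorem1:
  fixes A J :: "real^'n^'n"
  assumes "metzler A" and "nonneg_mat J"
  shows "((\<exists>l::real^'n. (\<forall>i. l $ i > 0) \<and> (\<forall>i. (l v* A) $ i < 0)
              \<and> (\<forall>i. (l v* (J - mat 1)) $ i < 0))
          \<longleftrightarrow>
          (\<forall>u v w :: real^'n. (\<forall>i. u $ i \<ge> 0) \<and> (\<forall>i. v $ i \<ge> 0) \<and> (\<forall>i. w $ i \<ge> 0)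
              \<and> u - A *v v - (J - mat 1) *v w = 0 \<longrightarrow> u = 0 \<and> v = 0 \<and> w = 0))
       \<and> ((\<exists>l::real^'n. (\<forall>i. l $ i > 0) \<and> (\<forall>i. (l v* A) $ i < 0)
              \<and> (\<forall>i. (l v* (J - mat 1)) $ i < 0))
          \<longrightarrow> (\<forall>t. impulse_seq t \<longrightarrow> impulsive_GAS A J t))"
  unfolding copositive_certificate_def[symmetric] orthant_kernel_trivial_def[symmetric]
  using copositive_certificate_imp_orthant_kernel_trivial[of A J]
    orthant_kernel_trivial_imp_copositive_certificate[of A J]
    copositive_certificate_imp_impulsive_GAS[OF assms]
  by blast

end
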